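(* Let $\mathcal{X}=\mathbb{V}^p$ for some $p\in\{0,1,\infty\}$ and let $\varphi$ be a dynamic LM-measure on $\mathcal{X}$. The following are equivalent: (1) $\varphi$ is semi-weakly acceptance time consistent, i.e. for all $V\in\mathcal{X}$, $t\in\mathbb{T}$ with $t<T$, and $m_{t+1}\in\bar L^0_{t+1}$: $\varphi_{t+1}(V)\ge m_{t+1}\Rightarrow\varphi_t(V)\ge 1_{\{V_t\ge0\}}\operatorname{Essinf}_t(m_{t+1})+1_{\{V_t<0\}}(-\infty)$; (2) for all $V\in\mathcal{X}$ and $t<T$: $\varphi_t(V)\ge 1_{\{V_t\ge0\}}\operatorname{Essinf}_t(\varphi_{t+1}(V))+1_{\{V_t<0\}}(-\infty)$; (3) for all $V\in\mathcal{X}$, $t<T$ and $m_t\in\bar L^0_t$: if $V_t\ge0$ and $\varphi_{t+1}(V)\ge m_t$, then $\varphi_t(V)\ge m_t$. Analogously, the following are equivalent: (1') $\varphi$ is semi-weakly rejection time consistent, i.e. $\varphi_{t+1}(V)\le m_{t+1}\Rightarrow\varphi_t(V)\le 1_{\{V_t\le0\}}\operatorname{Esssup}_t(m_{t+1})+1_{\{V_t>0\}}(+\infty)$ for all $V$, $t<T$, $m_{t+1}\in\bar L^0_{t+1}$; (2') $\varphi_t(V)\le 1_{\{V_t\le0\}}\operatorname{Esssup}_t(\varphi_{t+1}(V))+1_{\{V_t>0\}}(+\infty)$ for all $V$, $t<T$; (3') for all $V$, $t<T$, $m_t\in\bar L^0_t$: if $V_t\le0$ and $\varphi_{t+1}(V)\le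 m_t$ then $\varphi_t(V)\le m_t$.
   Context: Let $(\Omega,\mathcal{F},\{\mathcal{F}_t\}_{t\in\mathbb{T}},P)$ be a filtered probability space, $\mathbb{T}=\{0,\dots,T\}$, $\mathcal{F}_0$ trivial. $\bar L^0_t$ denotes $\mathcal{F}_t$-measurable random variables with values in $[-\infty,\infty]$; $L^p_t=L^p(\Omega,\mathcal{F}_t,P)$; $\mathbb{V}^p=\{(V_t)_{t\in\mathbb{T}}:V_t\in L^p_t\}$ ordered pointwise a.s. For $m\in L^\infty_t$, $m\cdot_tV:=(V_0,\dots,V_{t-1},mV_t,mV_{t+1},\dots)$. Conventions: $\infty-\infty=-\infty$, $0\cdot\pm\infty=0$. A dynamic LM-measure is a family $\{\varphi_t\}_{t\in\mathbb{T}}$ of maps $\varphi_t:\mathbb{V}^p\to\bar L^0_t$ with $1_A\varphi_t(V)=1_A\varphi_t(1_A\cdot_tV)$ for all $A\in\mathcal{F}_t$ and $V\le W\Rightarrow\varphi_t(V)\le\varphi_t(W)$. For bounded $X$, $\operatorname{Essinf}_tX$ is the largest $\mathcal{F}_t$-measurable random variable a.s. dominated by $X$, $\operatorname{Esssup}_tX=-\operatorname{Essinf}_t(-X)$; for $[-\infty,\infty]$-valued $X$, $\operatorname{Essinf}_tX:=\lim_n\operatorname{Essinf}_t(X^+\wedge n)-\lim_n\operatorname{Esssup}_t(X^-\wedge n)$ and $\operatorname{Esssup}_tX:=-\operatorname{Essinf}_t(-X)$. *)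

theory Defs
  imports "HOL-Probability.Probability"
begin

definition filtration :: "'a measure \<Rightarrow> (nat \<Rightarrow> 'a measure) \<Rightarrow> nat \<Rightarrow> bool" where
  "filtration M F T \<longleftrightarrow>
     (\<forall>t\<le>T. subalgebra M (F t)) \<and>
     (\<forall>s t. s \<le> t \<longrightarrow> t \<le> T \<longrightarrow> sets (F s) \<subseteq> sets (F t)) \<and>
     sets (F 0) = {{}, space M}"

definition in_Lp :: "'a measure \<Rightarrow> 'a measure \<Rightarrow> ennreal \<Rightarrow> ('a \<Rightarrow> real) \<Rightarrow> bool" where
  "in_Lp M G p f \<longleftrightarrow> f \<in> borel_measurable G \<and>
     (if p = 0 then True
      else if p = 1 then integrable M f
      else (\<exists>C. AE \<omega> in M. \<bar>f \<omega>\<bar> \<le> C))"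

definition Vp :: "'a measure \<Rightarrow> (nat \<Rightarrow> 'a measure) \<Rightarrow> nat \<Rightarrow> ennreal \<Rightarrow> (nat \<Rightarrow> 'a \<Rightarrow> real) set" where
  "Vp M F T p = {V. \<forall>t\<le>T. in_Lp M (F t) p (V t)}"

definition proc_le :: "'a measure \<Rightarrow> nat \<Rightarrow> (nat \<Rightarrow> 'a \<Rightarrow> real) \<Rightarrow> (nat \<Rightarrow> 'a \<Rightarrow> real) \<Rightarrow> bool" where
  "proc_le M T V W \<longleftrightarrow> (\<forall>t\<le>T. AE \<omega> in M. V t \<omega> \<le> W t \<omega>)"

definition dot_t :: "('a \<Rightarrow> real) \<Rightarrow> nat \<Rightarrow> (nat \<Rightarrow> 'a \<Rightarrow> real) \<Rightarrow> (nat \<Rightarrow> 'a \<Rightarrow> real)" where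
  "dot_t m t V = (\<lambda>s \<omega>. if s < t then V s \<omega> else m \<omega> * V s \<omega>)"

definition dyn_LM :: "'a measure \<Rightarrow> (nat \<Rightarrow> 'a measure) \<Rightarrow> nat \<Rightarrow> ennreal
     \<Rightarrow> (nat \<Rightarrow> (nat \<Rightarrow> 'a \<Rightarrow> real) \<Rightarrow> 'a \<Rightarrow> ereal) \<Rightarrow> bool" where
  "dyn_LM M F T p \<phi> \<longleftrightarrow>
     (\<forall>t\<le>T. \<forall>V\<in>Vp M F T p. \<phi> t V \<in> borel_measurable (F t)) \<and>
     (\<forall>t\<le>T. \<forall>A\<in>sets (F t). \<forall>V\<in>Vp M F T p.
        AE \<omega> in M. ereal (indicator A \<omega>) * \<phi> t V \<omega>
                   = ereal (indicator A \<omega>) * \<phi> t (dot_t (indicator A) t V) \<omega>) \<and>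
     (\<forall>t\<le>T. \<forall>V\<in>Vp M F T p. \<forall>W\<in>Vp M F T p.
        proc_le M T V W \<longrightarrow> (AE \<omega> in M. \<phi> t V \<omega> \<le> \<phi> t W \<omega>))"

definition is_cond_essinf :: "'a measure \<Rightarrow> 'a measure \<Rightarrow> ('a \<Rightarrow> ereal) \<Rightarrow> ('a \<Rightarrow> ereal) \<Rightarrow> bool" where
  "is_cond_essinf M G X Y \<longleftrightarrow> Y \<in> borel_measurable G \<and> (AE \<omega> in M. Y \<omega> \<le> X \<omega>) \<and>
     (\<forall>Z\<in>borel_measurable G. (AE \<omega> in M. Z \<omega> \<le> X \<omega>) \<longrightarrow> (AE \<omega> in M. Z \<omega> \<le> Y \<omega>))"

text \<open>Essinf_t for bounded X (a representative of the a.s.-unique class).\<close>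
definition essinf_b :: "'a measure \<Rightarrow> 'a measure \<Rightarrow> ('a \<Rightarrow> ereal) \<Rightarrow> ('a \<Rightarrow> ereal)" where
  "essinf_b M G X = (SOME Y. is_cond_essinf M G X Y)"

definition esssup_b :: "'a measure \<Rightarrow> 'a measure \<Rightarrow> ('a \<Rightarrow> ereal) \<Rightarrow> ('a \<Rightarrow> ereal)" where
  "esssup_b M G X = (\<lambda>\<omega>. - essinf_b M G (\<lambda>x. - X x) \<omega>)"

definition ereal_sub :: "ereal \<Rightarrow> ereal \<Rightarrow> ereal" where
  "ereal_sub a b = (if a = \<infinity> \<and> b = \<infinity> then -\<infinity> else a - b)"

text \<open>Essinf_t for [-inf,inf]-valued X: lim_n Essinf_t(X^+ /\ n) - lim_n Esssup_t(X^- /\ n);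
  both sequences are a.s. nondecreasing, so the limits are taken as suprema.\<close>
definition Essinf :: "'a measure \<Rightarrow> 'a measure \<Rightarrow> ('a \<Rightarrow> ereal) \<Rightarrow> ('a \<Rightarrow> ereal)" where
  "Essinf M G X = (\<lambda>\<omega>. ereal_sub
      (SUP n::nat. essinf_b M G (\<lambda>x. min (max (X x) 0) (ereal (real n))) \<omega>)
      (SUP n::nat. esssup_b M G (\<lambda>x. min (max (- X x) 0) (ereal (real n))) \<omega>))"

definition Esssup :: "'a measure \<Rightarrow> 'a measure \<Rightarrow> ('a \<Rightarrow> ereal) \<Rightarrow> ('a \<Rightarrow> ereal)" where
  "Esssup M G X = (\<lambda>\<omega>. - Essinf M G (\<lambda>x. - X x) \<omega>)"

end

theory Submission
  imports Defs
begin

(*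
  Condition (2) is (1) for the largest admissible bound m = \<phi>_{t+1}(V), and (1) follows back
  from (2) because Essinf_t is monotone. (2) gives (3) since an F_t-measurable lower bound of
  \<phi>_{t+1}(V) lies below Essinf_t \<phi>_{t+1}(V). For (3) \<Longrightarrow> (2), apply (3) to 1_A \<cdot>_t V with
  A = {V_t \<ge> 0}: this process is nonnegative at time t, agrees with V under \<phi>_t on A by locality,
  and dominates 1_A \<cdot>_{t+1} V, which agrees with V under \<phi>_{t+1} on A. The rejection statements
  are the acceptance statements for the dual measure V \<mapsto> -\<phi>(-V), as Esssup_t X = -Essinf_t(-X).
*)

section \<open>Conditional essential infimum\<close>

lemma (in finite_measure) ae_greatest_set_of_Union_closed:
  assumes sets: "\<C> \<subseteq> sets M" and empty: "{} \<in> \<C>"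
    and Union: "\<And>f::nat \<Rightarrow> 'a set. range f \<subseteq> \<C> \<Longrightarrow> (\<Union>i. f i) \<in> \<C>"
  shows "\<exists>B\<in>\<C>. \<forall>C\<in>\<C>. measure M (C - B) = 0"
proof -
  define c where "c = Sup (measure M ` \<C>)"
  have bdd: "bdd_above (measure M ` \<C>)"
    by (rule bdd_aboveI[of _ "measure M (space M)"]) (use sets in \<open>auto intro: bounded_measure\<close>)
  have le_c: "measure M C \<le> c" if "C \<in> \<C>" for C
    unfolding c_def using that bdd by (auto intro: cSup_upper)
  have "\<exists>C\<in>\<C>. c - 1 / Suc n < measure M C" for n :: nat
  proof -
    have "c - 1 / Suc n < c" by simp
    then obtain x where "x \<in> measure M ` \<C>" "c - 1 / Suc n < x"
      using less_cSupD[of "measure M ` \<C>"] empty unfolding c_def by blast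
    then show ?thesis by blast
  qed
  then obtain f where f: "\<And>n. f n \<in> \<C>" "\<And>n. c - 1 / Suc n < measure M (f n)"
    by metis
  define B where "B = (\<Union>i. f i)"
  have B: "B \<in> \<C>" unfolding B_def using Union f(1) by blast
  have approx: "c - 1 / Suc n < measure M B" for n
  proof -
    have "measure M (f n) \<le> measure M B"
      unfolding B_def by (rule finite_measure_mono) (use B sets f in \<open>auto simp: B_def\<close>)
    then show ?thesis using f(2)[of n] by linarith
  qed
  have c_le: "c \<le> measure M B"
  proof (rule ccontr)
    assume "\<not> c \<le> measure M B"
    then obtain n where "inverse (real (Suc n)) < c - measure M B"
      using reals_Archimedean[of "c - measure M B"] by auto
    with approx[of n] show False
      by (simp add: field_simps)
  qed
  show ?thesis
  proof (intro bexI[OF _ B] ballI)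
    fix C assume C: "C \<in> \<C>"
    have "(\<Union>n::nat. if n = 0 then B else C) \<in> \<C>"
      by (rule Union) (use B C in auto)
    moreover have "(\<Union>n::nat. if n = 0 then B else C) = B \<union> C"
      by (auto split: if_splits)
    ultimately have "B \<union> C \<in> \<C>"
      by (simp only:)
    have "measure M (B \<union> C) = measure M B + measure M (C - B)"
      using finite_measure_Union[of B "C - B"] B C sets
      by (metis Diff_disjoint Un_Diff_cancel subsetD sets.Diff)
    with le_c[OF \<open>B \<union> C \<in> \<C>\<close>] c_le show "measure M (C - B) = 0"
      using measure_nonneg[of M "C - B"] by linarith
  qed
qed

lemma cond_essinf_exists:
  assumes "finite_measure M" and sub: "subalgebra M G"
  shows "\<exists>Y. is_cond_essinf M G X Y"
proof -
  interpret finite_measure M by fact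
  have space_G: "space G = space M" and sets_G: "sets G \<subseteq> sets M"
    using sub by (auto simp: subalgebra_def)
  define \<C> where "\<C> q = {B \<in> sets G. AE \<omega> in M. \<omega> \<in> B \<longrightarrow> ereal q \<le> X \<omega>}" for q :: real
  have "\<exists>B\<in>\<C> q. \<forall>C\<in>\<C> q. measure M (C - B) = 0" for q
  proof (rule ae_greatest_set_of_Union_closed)
    show "\<C> q \<subseteq> sets M" using sets_G by (auto simp: \<C>_def)
    show "{} \<in> \<C> q" by (auto simp: \<C>_def)
    fix f :: "nat \<Rightarrow> 'a set" assume "range f \<subseteq> \<C> q"
    then have f: "\<And>i. f i \<in> sets G" "\<And>i. AE \<omega> in M. \<omega> \<in> f i \<longrightarrow> ereal q \<le> X \<omega>"
      by (auto simp: \<C>_def)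
    have "AE \<omega> in M. \<forall>i. \<omega> \<in> f i \<longrightarrow> ereal q \<le> X \<omega>"
      by (subst AE_all_countable) (intro allI f(2))
    then have "AE \<omega> in M. \<omega> \<in> (\<Union>i. f i) \<longrightarrow> ereal q \<le> X \<omega>"
      by (rule AE_mp) auto
    then show "(\<Union>i. f i) \<in> \<C> q" using f(1) by (auto simp: \<C>_def)
  qed
  then obtain B where B: "\<And>q. B q \<in> \<C> q" "\<And>q C. C \<in> \<C> q \<Longrightarrow> measure M (C - B q) = 0"
    by metis
  have B_G: "B q \<in> sets G" for q using B(1) by (auto simp: \<C>_def)
  \<comment> \<open>On \<open>B q\<close> the variable \<open>X\<close> is a.s. at least \<open>q\<close>, and \<open>B q\<close> is a.s. the largest such set.\<close>
  define Y where "Y \<omega> = (SUP q\<in>\<rat>. if \<omega> \<in> B q then ereal q else -\<infinity>)" for \<omega>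
  have "Y \<in> borel_measurable G"
    unfolding Y_def by (intro borel_measurable_SUP countable_rat measurable_If_set) (use B_G in auto)
  moreover have "AE \<omega> in M. Y \<omega> \<le> X \<omega>"
  proof -
    have "AE \<omega> in M. \<forall>q\<in>\<rat>. \<omega> \<in> B q \<longrightarrow> ereal q \<le> X \<omega>"
      using B(1) countable_rat by (subst AE_ball_countable) (auto simp: \<C>_def)
    then show ?thesis unfolding Y_def by eventually_elim (rule SUP_least, auto)
  qed
  moreover have "AE \<omega> in M. Z \<omega> \<le> Y \<omega>"
    if Z: "Z \<in> borel_measurable G" "AE \<omega> in M. Z \<omega> \<le> X \<omega>" for Z
  proof -
    have null: "{\<omega>\<in>space G. ereal q \<le> Z \<omega>} - B q \<in> null_sets M" for q
    proof -
      have C: "{\<omega>\<in>space G. ereal q \<le> Z \<omega>} \<in> \<C> q"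
        unfolding \<C>_def using Z by (auto elim!: AE_mp)
      then have "{\<omega>\<in>space G. ereal q \<le> Z \<omega>} - B q \<in> sets M"
        using B_G sets_G by (auto simp: \<C>_def)
      with B(2)[OF C] show ?thesis by (simp add: emeasure_eq_measure null_sets_def)
    qed
    have "AE \<omega> in M. \<forall>q\<in>\<rat>. \<omega> \<notin> {\<omega>\<in>space G. ereal q \<le> Z \<omega>} - B q"
      by (rule AE_ball_countable[THEN iffD2, OF countable_rat]) (intro ballI AE_not_in null)
    with AE_space show ?thesis
    proof eventually_elim
      case (elim \<omega>)
      show "Z \<omega> \<le> Y \<omega>"
      proof (rule ccontr)
        assume "\<not> Z \<omega> \<le> Y \<omega>"
        then have "Y \<omega> < Z \<omega>" by simp
        then obtain r where r: "Y \<omega> < ereal r" "ereal r < Z \<omega>"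
          using ereal_dense2 by blast
        then obtain r' where r': "Y \<omega> < ereal r'" "ereal r' < ereal r"
          using ereal_dense2 by blast
        obtain q where q: "q \<in> \<rat>" "r' < q" "q < r"
          using Rats_dense_in_real r'(2) by auto
        have "ereal r' < ereal q" "ereal q < ereal r" using q(2,3) by simp_all
        then have "Y \<omega> < ereal q" "ereal q \<le> Z \<omega>"
          using less_trans[OF r'(1)] less_trans[OF _ r(2)] by (blast intro: less_imp_le)+
        with q(1) elim space_G have "\<omega> \<in> B q" by blast
        then have "ereal q \<le> Y \<omega>" unfolding Y_def using q(1) by (intro SUP_upper2[of q]) auto
        with \<open>Y \<omega> < ereal q\<close> show False by simp
      qed
    qed
  qed
  ultimately show ?thesis unfolding is_cond_essinf_def by blast
qed

lemma is_cond_essinf_essinf_b: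
  assumes "finite_measure M" and "subalgebra M G"
  shows "is_cond_essinf M G X (essinf_b M G X)"
  unfolding essinf_b_def using cond_essinf_exists[OF assms] by (rule someI_ex)

lemma ereal_le_if_truncations_le:
  assumes "\<And>n::nat. min y (ereal (real n)) \<le> b"
  shows "y \<le> (b::ereal)"
proof (cases y)
  case (real r)
  obtain n :: nat where "r \<le> real n" using real_arch_simple by blast
  with assms[of n] real show ?thesis by (metis ereal_less_eq(3) min.absorb1)
next
  case PInf
  show ?thesis
  proof (cases b)
    case (real s)
    obtain n :: nat where "s < real n" using reals_Archimedean2 by blast
    with assms[of n] PInf real show ?thesis by simp
  qed (use PInf assms in auto)
qed simp

lemma ereal_sub_le_of_parts: "a \<le> max x 0 \<Longrightarrow> max (- x) 0 \<le> b \<Longrightarrow> ereal_sub a b \<le> (x::ereal)"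
  by (cases a; cases b; cases x) (auto simp: ereal_sub_def max_def split: if_splits)

lemma ereal_sub_ge_of_parts: "max x 0 \<le> a \<Longrightarrow> b \<le> max (- x) 0 \<Longrightarrow> x \<le> ereal_sub a (b::ereal)"
  by (cases a; cases b; cases x) (auto simp: ereal_sub_def max_def split: if_splits)

context
  fixes M G
  assumes finite: "finite_measure M" and sub: "subalgebra M G"
begin

lemma measurable_essinf_b [measurable]: "essinf_b M G X \<in> borel_measurable G"
  using is_cond_essinf_essinf_b[OF finite sub] by (simp add: is_cond_essinf_def)

lemma AE_essinf_b_le: "AE \<omega> in M. essinf_b M G X \<omega> \<le> X \<omega>"
  using is_cond_essinf_essinf_b[OF finite sub] by (simp add: is_cond_essinf_def)

lemma AE_le_essinf_b:
  "Z \<in> borel_measurable G \<Longrightarrow> AE \<omega> in M. Z \<omega> \<le> X \<omega> \<Longrightarrow> AE \<omega> in M. Z \<omega> \<le> essinf_b M G X \<omega>"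
  using is_cond_essinf_essinf_b[OF finite sub] by (simp add: is_cond_essinf_def)

lemma measurable_Essinf [measurable]: "Essinf M G X \<in> borel_measurable G"
  unfolding Essinf_def ereal_sub_def esssup_b_def by measurable

lemma AE_Essinf_le: "AE \<omega> in M. Essinf M G X \<omega> \<le> X \<omega>"
proof -
  have "AE \<omega> in M. \<forall>n::nat. essinf_b M G (\<lambda>x. min (max (X x) 0) (ereal n)) \<omega>
                              \<le> min (max (X \<omega>) 0) (ereal n)"
    by (subst AE_all_countable) (intro allI AE_essinf_b_le)
  moreover have "AE \<omega> in M. \<forall>n::nat. essinf_b M G (\<lambda>x. - min (max (- X x) 0) (ereal n)) \<omega>
                              \<le> - min (max (- X \<omega>) 0) (ereal n)"
    by (subst AE_all_countable) (intro allI AE_essinf_b_le)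
  ultimately show ?thesis
  proof eventually_elim
    case (elim \<omega>)
    show ?case unfolding Essinf_def
    proof (rule ereal_sub_le_of_parts)
      show "(SUP n::nat. essinf_b M G (\<lambda>x. min (max (X x) 0) (ereal n)) \<omega>) \<le> max (X \<omega>) 0"
        using elim(1) by (intro SUP_least) (meson min.cobounded1 order_trans)
      show "max (- X \<omega>) 0 \<le> (SUP n::nat. esssup_b M G (\<lambda>x. min (max (- X x) 0) (ereal n)) \<omega>)"
      proof (rule ereal_le_if_truncations_le)
        fix n :: nat
        have "min (max (- X \<omega>) 0) (ereal n) \<le> esssup_b M G (\<lambda>x. min (max (- X x) 0) (ereal n)) \<omega>"
          using elim(2)[rule_format, of n] unfolding esssup_b_def
          by (metis ereal_uminus_le_reorder ereal_uminus_uminus)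
        also have "\<dots> \<le> (SUP n::nat. esssup_b M G (\<lambda>x. min (max (- X x) 0) (ereal n)) \<omega>)"
          by (rule SUP_upper) simp
        finally show "min (max (- X \<omega>) 0) (ereal n) \<le> \<dots>" .
      qed
    qed
  qed
qed

lemma AE_le_Essinf:
  assumes m: "m \<in> borel_measurable G" and le: "AE \<omega> in M. m \<omega> \<le> X \<omega>"
  shows "AE \<omega> in M. m \<omega> \<le> Essinf M G X \<omega>"
proof -
  have "AE \<omega> in M. \<forall>n::nat. min (max (m \<omega>) 0) (ereal n)
                              \<le> essinf_b M G (\<lambda>x. min (max (X x) 0) (ereal n)) \<omega>"
  proof (subst AE_all_countable, intro allI AE_le_essinf_b)
    fix n :: nat
    show "(\<lambda>\<omega>. min (max (m \<omega>) 0) (ereal n)) \<in> borel_measurable G" using m by measurable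
    show "AE \<omega> in M. min (max (m \<omega>) 0) (ereal n) \<le> min (max (X \<omega>) 0) (ereal n)"
      using le by eventually_elim (auto simp: min_def max_def)
  qed
  moreover have "AE \<omega> in M. \<forall>n::nat. - min (max (- m \<omega>) 0) (ereal n)
                              \<le> essinf_b M G (\<lambda>x. - min (max (- X x) 0) (ereal n)) \<omega>"
  proof (subst AE_all_countable, intro allI AE_le_essinf_b)
    fix n :: nat
    show "(\<lambda>\<omega>. - min (max (- m \<omega>) 0) (ereal n)) \<in> borel_measurable G" using m by measurable
    show "AE \<omega> in M. - min (max (- m \<omega>) 0) (ereal n) \<le> - min (max (- X \<omega>) 0) (ereal n)"
      using le by eventually_elim (simp only: ereal_minus_le_minus, intro min.mono max.mono, auto)
  qed
  ultimately show ?thesis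
  proof eventually_elim
    case (elim \<omega>)
    show ?case unfolding Essinf_def
    proof (rule ereal_sub_ge_of_parts)
      show "max (m \<omega>) 0 \<le> (SUP n::nat. essinf_b M G (\<lambda>x. min (max (X x) 0) (ereal n)) \<omega>)"
      proof (rule ereal_le_if_truncations_le)
        fix n :: nat
        show "min (max (m \<omega>) 0) (ereal n) \<le> (SUP n::nat. essinf_b M G (\<lambda>x. min (max (X x) 0) (ereal n)) \<omega>)"
          using elim(1)[rule_format, of n] by (meson SUP_upper2 UNIV_I)
      qed
      show "(SUP n::nat. esssup_b M G (\<lambda>x. min (max (- X x) 0) (ereal n)) \<omega>) \<le> max (- m \<omega>) 0"
      proof (rule SUP_least)
        fix n :: nat
        have "esssup_b M G (\<lambda>x. min (max (- X x) 0) (ereal n)) \<omega> \<le> min (max (- m \<omega>) 0) (ereal n)"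
          using elim(2)[rule_format, of n] unfolding esssup_b_def
          by (metis ereal_uminus_le_reorder ereal_uminus_uminus)
        also have "\<dots> \<le> max (- m \<omega>) 0" by simp
        finally show "esssup_b M G (\<lambda>x. min (max (- X x) 0) (ereal n)) \<omega> \<le> max (- m \<omega>) 0" .
      qed
    qed
  qed
qed

lemma AE_Essinf_mono:
  assumes "AE \<omega> in M. X \<omega> \<le> Y \<omega>"
  shows "AE \<omega> in M. Essinf M G X \<omega> \<le> Essinf M G Y \<omega>"
proof (rule AE_le_Essinf)
  show "AE \<omega> in M. Essinf M G X \<omega> \<le> Y \<omega>"
    using AE_Essinf_le[of X] assms by eventually_elim auto
qed measurable

end

section \<open>Dynamic LM-measures\<close>

lemma in_Lp_mult_indicator:
  assumes f: "in_Lp M G p f" and A: "A \<in> sets G" and sets_G: "sets G \<subseteq> sets M"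
  shows "in_Lp M G p (\<lambda>\<omega>. indicator A \<omega> * f \<omega>)"
  unfolding in_Lp_def
proof (intro conjI)
  have [measurable]: "f \<in> borel_measurable G" using f by (simp add: in_Lp_def)
  show "(\<lambda>\<omega>. indicator A \<omega> * f \<omega>) \<in> borel_measurable G" using A by measurable
  have "integrable M (\<lambda>\<omega>. indicator A \<omega> * f \<omega>)" if "p = 1"
    using integrable_mult_indicator[of A M f] f A sets_G that by (auto simp: in_Lp_def)
  moreover have "\<exists>C. AE \<omega> in M. \<bar>indicator A \<omega> * f \<omega>\<bar> \<le> C" if "p \<noteq> 0" "p \<noteq> 1"
  proof -
    from f that obtain C where "AE \<omega> in M. \<bar>f \<omega>\<bar> \<le> C" by (auto simp: in_Lp_def)
    then have "AE \<omega> in M. \<bar>indicator A \<omega> * f \<omega>\<bar> \<le> C"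
      by eventually_elim (auto simp: indicator_def)
    then show ?thesis ..
  qed
  ultimately show "if p = 0 then True else if p = 1 then integrable M (\<lambda>\<omega>. indicator A \<omega> * f \<omega>)
      else \<exists>C. AE \<omega> in M. \<bar>indicator A \<omega> * f \<omega>\<bar> \<le> C"
    by simp
qed

lemma in_Lp_uminus: "in_Lp M G p f \<Longrightarrow> in_Lp M G p (\<lambda>\<omega>. - f \<omega>)"
  by (auto simp: in_Lp_def)

lemma measurable_Vp: "V \<in> Vp M F T p \<Longrightarrow> t \<le> T \<Longrightarrow> V t \<in> borel_measurable (F t)"
  by (simp add: Vp_def in_Lp_def)

lemma measurable_dyn_LM:
  "dyn_LM M F T p \<phi> \<Longrightarrow> V \<in> Vp M F T p \<Longrightarrow> t \<le> T \<Longrightarrow> \<phi> t V \<in> borel_measurable (F t)"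
  by (simp add: dyn_LM_def)

lemma dyn_LM_local:
  assumes "dyn_LM M F T p \<phi>" "t \<le> T" "A \<in> sets (F t)" "V \<in> Vp M F T p"
  shows "AE \<omega> in M. \<omega> \<in> A \<longrightarrow> \<phi> t V \<omega> = \<phi> t (dot_t (indicator A) t V) \<omega>"
proof -
  have "AE \<omega> in M. ereal (indicator A \<omega>) * \<phi> t V \<omega>
                   = ereal (indicator A \<omega>) * \<phi> t (dot_t (indicator A) t V) \<omega>"
    using assms by (simp add: dyn_LM_def)
  then show ?thesis by eventually_elim (auto simp: indicator_def one_ereal_def[symmetric])
qed

lemma dyn_LM_mono:
  assumes "dyn_LM M F T p \<phi>" "t \<le> T" "V \<in> Vp M F T p" "W \<in> Vp M F T p"
    and "\<And>s \<omega>. s \<le> T \<Longrightarrow> \<omega> \<in> space M \<Longrightarrow> V s \<omega> \<le> W s \<omega>"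
  shows "AE \<omega> in M. \<phi> t V \<omega> \<le> \<phi> t W \<omega>"
  using assms by (auto simp: dyn_LM_def proc_le_def)

context
  fixes M :: "'a measure" and F :: "nat \<Rightarrow> 'a measure" and T :: nat and p :: ennreal
  assumes filt: "filtration M F T"
begin

lemma subalgebra_filtration: "t \<le> T \<Longrightarrow> subalgebra M (F t)"
  using filt by (simp add: filtration_def)

lemma sets_filtration_mono: "s \<le> t \<Longrightarrow> t \<le> T \<Longrightarrow> A \<in> sets (F s) \<Longrightarrow> A \<in> sets (F t)"
  using filt by (auto simp: filtration_def)

lemma dot_t_indicator_in_Vp:
  assumes "t \<le> T" "A \<in> sets (F t)" "V \<in> Vp M F T p"
  shows "dot_t (indicator A) t V \<in> Vp M F T p"
  unfolding Vp_def
proof (intro CollectI allI impI)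
  fix s assume s: "s \<le> T"
  show "in_Lp M (F s) p (dot_t (indicator A) t V s)"
  proof (cases "s < t")
    case False
    then have "A \<in> sets (F s)" using sets_filtration_mono[of t s A] assms s by simp
    moreover have "sets (F s) \<subseteq> sets M" using subalgebra_filtration[OF s] by (simp add: subalgebra_def)
    ultimately show ?thesis
      using in_Lp_mult_indicator[of M "F s" p "V s" A] assms s False by (simp add: dot_t_def Vp_def)
  qed (use assms s in \<open>simp add: dot_t_def Vp_def\<close>)
qed

lemma dyn_LM_Suc_le_dot_t:
  assumes LM: "dyn_LM M F T p \<phi>" and t: "t < T" and A: "A \<in> sets (F t)" and V: "V \<in> Vp M F T p"
    and nonpos: "\<forall>\<omega>\<in>space M - A. V t \<omega> \<le> 0"
  shows "AE \<omega> in M. \<omega> \<in> A \<longrightarrow> \<phi> (Suc t) V \<omega> \<le> \<phi> (Suc t) (dot_t (indicator A) t V) \<omega>"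
proof -
  have tT: "t \<le> T" "Suc t \<le> T" using t by auto
  have A': "A \<in> sets (F (Suc t))" using sets_filtration_mono[OF _ tT(2) A] by simp
  have "AE \<omega> in M. \<omega> \<in> A \<longrightarrow> \<phi> (Suc t) V \<omega> = \<phi> (Suc t) (dot_t (indicator A) (Suc t) V) \<omega>"
    by (rule dyn_LM_local[OF LM tT(2) A' V])
  moreover have "AE \<omega> in M. \<phi> (Suc t) (dot_t (indicator A) (Suc t) V) \<omega>
                              \<le> \<phi> (Suc t) (dot_t (indicator A) t V) \<omega>"
  proof (rule dyn_LM_mono[OF LM tT(2)])
    show "dot_t (indicator A) (Suc t) V \<in> Vp M F T p" by (rule dot_t_indicator_in_Vp[OF tT(2) A' V])
    show "dot_t (indicator A) t V \<in> Vp M F T p" by (rule dot_t_indicator_in_Vp[OF tT(1) A V])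
    fix s \<omega> assume "s \<le> T" "\<omega> \<in> space M"
    then show "dot_t (indicator A) (Suc t) V s \<omega> \<le> dot_t (indicator A) t V s \<omega>"
      using nonpos by (cases "s < t"; cases "s = t") (auto simp: dot_t_def indicator_def)
  qed
  ultimately show ?thesis by eventually_elim auto
qed

end

section \<open>Semi-weak acceptance time consistency\<close>

definition semi_weakly_acceptance_tc ::
    "'a measure \<Rightarrow> (nat \<Rightarrow> 'a measure) \<Rightarrow> nat \<Rightarrow> ennreal \<Rightarrow> (nat \<Rightarrow> (nat \<Rightarrow> 'a \<Rightarrow> real) \<Rightarrow> 'a \<Rightarrow> ereal) \<Rightarrow> bool" where
  "semi_weakly_acceptance_tc M F T p \<phi> \<longleftrightarrow>
     (\<forall>V\<in>Vp M F T p. \<forall>t<T. \<forall>m \<in> borel_measurable (F (Suc t)).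
        (AE \<omega> in M. \<phi> (Suc t) V \<omega> \<ge> m \<omega>) \<longrightarrow>
        (AE \<omega> in M. \<phi> t V \<omega> \<ge> (if V t \<omega> \<ge> 0 then Essinf M (F t) m \<omega> else -\<infinity>)))"

definition acceptance_Essinf_bound ::
    "'a measure \<Rightarrow> (nat \<Rightarrow> 'a measure) \<Rightarrow> nat \<Rightarrow> ennreal \<Rightarrow> (nat \<Rightarrow> (nat \<Rightarrow> 'a \<Rightarrow> real) \<Rightarrow> 'a \<Rightarrow> ereal) \<Rightarrow> bool" where
  "acceptance_Essinf_bound M F T p \<phi> \<longleftrightarrow>
     (\<forall>V\<in>Vp M F T p. \<forall>t<T.
        AE \<omega> in M. \<phi> t V \<omega> \<ge> (if V t \<omega> \<ge> 0 then Essinf M (F t) (\<phi> (Suc t) V) \<omega> else -\<infinity>))"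

definition acceptance_Ft_bound ::
    "'a measure \<Rightarrow> (nat \<Rightarrow> 'a measure) \<Rightarrow> nat \<Rightarrow> ennreal \<Rightarrow> (nat \<Rightarrow> (nat \<Rightarrow> 'a \<Rightarrow> real) \<Rightarrow> 'a \<Rightarrow> ereal) \<Rightarrow> bool" where
  "acceptance_Ft_bound M F T p \<phi> \<longleftrightarrow>
     (\<forall>V\<in>Vp M F T p. \<forall>t<T. \<forall>m \<in> borel_measurable (F t).
        (AE \<omega> in M. V t \<omega> \<ge> 0) \<longrightarrow> (AE \<omega> in M. \<phi> (Suc t) V \<omega> \<ge> m \<omega>) \<longrightarrow>
        (AE \<omega> in M. \<phi> t V \<omega> \<ge> m \<omega>))"

definition semi_weakly_rejection_tc ::
    "'a measure \<Rightarrow> (nat \<Rightarrow> 'a measure) \<Rightarrow> nat \<Rightarrow> ennreal \<Rightarrow> (nat \<Rightarrow> (nat \<Rightarrow> 'a \<Rightarrow> real) \<Rightarrow> 'a \<Rightarrow> ereal) \<Rightarrow> bool" where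
  "semi_weakly_rejection_tc M F T p \<phi> \<longleftrightarrow>
     (\<forall>V\<in>Vp M F T p. \<forall>t<T. \<forall>m \<in> borel_measurable (F (Suc t)).
        (AE \<omega> in M. \<phi> (Suc t) V \<omega> \<le> m \<omega>) \<longrightarrow>
        (AE \<omega> in M. \<phi> t V \<omega> \<le> (if V t \<omega> \<le> 0 then Esssup M (F t) m \<omega> else \<infinity>)))"

definition rejection_Esssup_bound ::
    "'a measure \<Rightarrow> (nat \<Rightarrow> 'a measure) \<Rightarrow> nat \<Rightarrow> ennreal \<Rightarrow> (nat \<Rightarrow> (nat \<Rightarrow> 'a \<Rightarrow> real) \<Rightarrow> 'a \<Rightarrow> ereal) \<Rightarrow> bool" where
  "rejection_Esssup_bound M F T p \<phi> \<longleftrightarrow>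
     (\<forall>V\<in>Vp M F T p. \<forall>t<T.
        AE \<omega> in M. \<phi> t V \<omega> \<le> (if V t \<omega> \<le> 0 then Esssup M (F t) (\<phi> (Suc t) V) \<omega> else \<infinity>))"

definition rejection_Ft_bound ::
    "'a measure \<Rightarrow> (nat \<Rightarrow> 'a measure) \<Rightarrow> nat \<Rightarrow> ennreal \<Rightarrow> (nat \<Rightarrow> (nat \<Rightarrow> 'a \<Rightarrow> real) \<Rightarrow> 'a \<Rightarrow> ereal) \<Rightarrow> bool" where
  "rejection_Ft_bound M F T p \<phi> \<longleftrightarrow>
     (\<forall>V\<in>Vp M F T p. \<forall>t<T. \<forall>m \<in> borel_measurable (F t).
        (AE \<omega> in M. V t \<omega> \<le> 0) \<longrightarrow> (AE \<omega> in M. \<phi> (Suc t) V \<omega> \<le> m \<omega>) \<longrightarrow>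
        (AE \<omega> in M. \<phi> t V \<omega> \<le> m \<omega>))"

context
  fixes M :: "'a measure" and F :: "nat \<Rightarrow> 'a measure" and T :: nat and p :: ennreal
    and \<phi> :: "nat \<Rightarrow> (nat \<Rightarrow> 'a \<Rightarrow> real) \<Rightarrow> 'a \<Rightarrow> ereal"
  assumes finite: "finite_measure M" and filt: "filtration M F T" and LM: "dyn_LM M F T p \<phi>"
begin

lemma semi_weakly_acceptance_tc_iff_Essinf_bound:
  "semi_weakly_acceptance_tc M F T p \<phi> \<longleftrightarrow> acceptance_Essinf_bound M F T p \<phi>"
proof
  assume tc: "semi_weakly_acceptance_tc M F T p \<phi>"
  show "acceptance_Essinf_bound M F T p \<phi>"
    unfolding acceptance_Essinf_bound_def
  proof (intro ballI allI impI)
    fix V t assume "V \<in> Vp M F T p" "t < T"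
    with tc show "AE \<omega> in M. (if V t \<omega> \<ge> 0 then Essinf M (F t) (\<phi> (Suc t) V) \<omega> else -\<infinity>) \<le> \<phi> t V \<omega>"
      using measurable_dyn_LM[OF LM, of V "Suc t"] unfolding semi_weakly_acceptance_tc_def by auto
  qed
next
  assume bound: "acceptance_Essinf_bound M F T p \<phi>"
  show "semi_weakly_acceptance_tc M F T p \<phi>"
    unfolding semi_weakly_acceptance_tc_def
  proof (intro ballI allI impI)
    fix V t m assume V: "V \<in> Vp M F T p" and t: "t < T" and le: "AE \<omega> in M. m \<omega> \<le> \<phi> (Suc t) V \<omega>"
    have "AE \<omega> in M. Essinf M (F t) m \<omega> \<le> Essinf M (F t) (\<phi> (Suc t) V) \<omega>"
      using AE_Essinf_mono[OF finite subalgebra_filtration[OF filt], of t] le t by simp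
    moreover have "AE \<omega> in M. (if V t \<omega> \<ge> 0 then Essinf M (F t) (\<phi> (Suc t) V) \<omega> else -\<infinity>) \<le> \<phi> t V \<omega>"
      using bound V t unfolding acceptance_Essinf_bound_def by auto
    ultimately show "AE \<omega> in M. (if V t \<omega> \<ge> 0 then Essinf M (F t) m \<omega> else -\<infinity>) \<le> \<phi> t V \<omega>"
      by eventually_elim (auto split: if_splits)
  qed
qed

lemma acceptance_Essinf_bound_iff_Ft_bound:
  "acceptance_Essinf_bound M F T p \<phi> \<longleftrightarrow> acceptance_Ft_bound M F T p \<phi>"
proof
  assume bound: "acceptance_Essinf_bound M F T p \<phi>"
  show "acceptance_Ft_bound M F T p \<phi>"
    unfolding acceptance_Ft_bound_def
  proof (intro ballI allI impI)
    fix V t m assume V: "V \<in> Vp M F T p" and t: "t < T" and m: "m \<in> borel_measurable (F t)"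
      and nonneg: "AE \<omega> in M. 0 \<le> V t \<omega>" and le: "AE \<omega> in M. m \<omega> \<le> \<phi> (Suc t) V \<omega>"
    have "AE \<omega> in M. m \<omega> \<le> Essinf M (F t) (\<phi> (Suc t) V) \<omega>"
      using AE_le_Essinf[OF finite subalgebra_filtration[OF filt] m] le t by simp
    moreover have "AE \<omega> in M. (if V t \<omega> \<ge> 0 then Essinf M (F t) (\<phi> (Suc t) V) \<omega> else -\<infinity>) \<le> \<phi> t V \<omega>"
      using bound V t unfolding acceptance_Essinf_bound_def by auto
    ultimately show "AE \<omega> in M. m \<omega> \<le> \<phi> t V \<omega>"
      using nonneg by eventually_elim auto
  qed
next
  assume Ft: "acceptance_Ft_bound M F T p \<phi>"
  show "acceptance_Essinf_bound M F T p \<phi>"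
    unfolding acceptance_Essinf_bound_def
  proof (intro ballI allI impI)
    fix V t assume V: "V \<in> Vp M F T p" and t: "t < T"
    have tT: "t \<le> T" using t by simp
    note sub = subalgebra_filtration[OF filt tT]
    define A where "A = {\<omega>\<in>space M. 0 \<le> V t \<omega>}"
    define W where "W = dot_t (indicator A) t V"
    define m where "m \<omega> = (if \<omega> \<in> A then Essinf M (F t) (\<phi> (Suc t) V) \<omega> else -\<infinity>)" for \<omega>
    have [measurable]: "V t \<in> borel_measurable (F t)" by (rule measurable_Vp[OF V tT])
    have "space (F t) = space M" using sub by (simp add: subalgebra_def)
    moreover have "{\<omega>\<in>space (F t). 0 \<le> V t \<omega>} \<in> sets (F t)" by measurable
    ultimately have A: "A \<in> sets (F t)" by (simp add: A_def)
    have W: "W \<in> Vp M F T p" unfolding W_def by (rule dot_t_indicator_in_Vp[OF filt tT A V])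
    have m: "m \<in> borel_measurable (F t)"
      unfolding m_def by (rule measurable_If_set) (use A measurable_Essinf[OF finite sub] in auto)
    have "AE \<omega> in M. 0 \<le> W t \<omega>" by (auto simp: W_def dot_t_def A_def indicator_def)
    moreover have "AE \<omega> in M. m \<omega> \<le> \<phi> (Suc t) W \<omega>"
    proof -
      have "\<forall>\<omega>\<in>space M - A. V t \<omega> \<le> 0" by (auto simp: A_def)
      from dyn_LM_Suc_le_dot_t[OF filt LM t A V this] AE_Essinf_le[OF finite sub, of "\<phi> (Suc t) V"]
      show ?thesis by eventually_elim (auto simp: W_def m_def)
    qed
    ultimately have "AE \<omega> in M. m \<omega> \<le> \<phi> t W \<omega>"
      using Ft W t m unfolding acceptance_Ft_bound_def by blast
    moreover have "AE \<omega> in M. \<omega> \<in> A \<longrightarrow> \<phi> t V \<omega> = \<phi> t W \<omega>"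
      unfolding W_def by (rule dyn_LM_local[OF LM tT A V])
    ultimately show "AE \<omega> in M. (if V t \<omega> \<ge> 0 then Essinf M (F t) (\<phi> (Suc t) V) \<omega> else -\<infinity>) \<le> \<phi> t V \<omega>"
      using AE_space by eventually_elim (auto simp: m_def A_def)
  qed
qed

end

section \<open>Duality between acceptance and rejection\<close>

lemma ereal_le_uminus_iff: "a \<le> - b \<longleftrightarrow> b \<le> - (a::ereal)"
  by (metis ereal_minus_le_minus ereal_uminus_uminus)

definition dual_LM ::
    "(nat \<Rightarrow> (nat \<Rightarrow> 'a \<Rightarrow> real) \<Rightarrow> 'a \<Rightarrow> ereal) \<Rightarrow> nat \<Rightarrow> (nat \<Rightarrow> 'a \<Rightarrow> real) \<Rightarrow> 'a \<Rightarrow> ereal" where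
  "dual_LM \<phi> = (\<lambda>t V \<omega>. - \<phi> t (\<lambda>s x. - V s x) \<omega>)"

lemma Vp_uminus: "V \<in> Vp M F T p \<Longrightarrow> (\<lambda>s \<omega>. - V s \<omega>) \<in> Vp M F T p"
  by (simp add: Vp_def in_Lp_uminus)

lemma ball_Vp_uminus: "(\<forall>V\<in>Vp M F T p. P V) \<longleftrightarrow> (\<forall>V\<in>Vp M F T p. P (\<lambda>s \<omega>. - V s \<omega>))"
proof (intro iffI ballI)
  fix V assume "\<forall>V\<in>Vp M F T p. P (\<lambda>s \<omega>. - V s \<omega>)" "V \<in> Vp M F T p"
  then show "P V" using Vp_uminus[of V] by fastforce
qed (use Vp_uminus in blast)

lemma ball_measurable_ereal_uminus:
  "(\<forall>m\<in>borel_measurable G. P m) \<longleftrightarrow> (\<forall>m\<in>borel_measurable G. P (\<lambda>\<omega>. - m \<omega> :: ereal))"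
proof (intro iffI ballI)
  fix m :: "'a \<Rightarrow> ereal"
  assume "\<forall>m\<in>borel_measurable G. P (\<lambda>\<omega>. - m \<omega>)" "m \<in> borel_measurable G"
  moreover have "(\<lambda>\<omega>. - m \<omega>) \<in> borel_measurable G" using \<open>m \<in> _\<close> by measurable
  ultimately show "P m" by fastforce
qed simp

lemma dot_t_uminus: "dot_t m t (\<lambda>s \<omega>. - V s \<omega>) = (\<lambda>s \<omega>. - dot_t m t V s \<omega>)"
  by (simp add: dot_t_def fun_eq_iff)

lemma dyn_LM_dual:
  assumes LM: "dyn_LM M F T p \<phi>"
  shows "dyn_LM M F T p (dual_LM \<phi>)"
  unfolding dyn_LM_def
proof (intro conjI ballI allI impI)
  fix t V assume "t \<le> T" "V \<in> Vp M F T p"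
  then have [measurable]: "\<phi> t (\<lambda>s \<omega>. - V s \<omega>) \<in> borel_measurable (F t)"
    using measurable_dyn_LM[OF LM Vp_uminus] by blast
  show "dual_LM \<phi> t V \<in> borel_measurable (F t)" unfolding dual_LM_def by measurable
next
  fix t A V assume "t \<le> T" "A \<in> sets (F t)" "V \<in> Vp M F T p"
  then have "AE \<omega> in M. ereal (indicator A \<omega>) * \<phi> t (\<lambda>s \<omega>. - V s \<omega>) \<omega>
      = ereal (indicator A \<omega>) * \<phi> t (dot_t (indicator A) t (\<lambda>s \<omega>. - V s \<omega>)) \<omega>"
    using LM Vp_uminus[of V] unfolding dyn_LM_def by blast
  then show "AE \<omega> in M. ereal (indicator A \<omega>) * dual_LM \<phi> t V \<omega>
      = ereal (indicator A \<omega>) * dual_LM \<phi> t (dot_t (indicator A) t V) \<omega>"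
    by eventually_elim (simp add: dual_LM_def dot_t_uminus)
next
  fix t V W assume "t \<le> T" "V \<in> Vp M F T p" "W \<in> Vp M F T p" "proc_le M T V W"
  moreover from \<open>proc_le M T V W\<close> have "proc_le M T (\<lambda>s \<omega>. - W s \<omega>) (\<lambda>s \<omega>. - V s \<omega>)"
    unfolding proc_le_def by (auto elim: AE_mp)
  ultimately have "AE \<omega> in M. \<phi> t (\<lambda>s \<omega>. - W s \<omega>) \<omega> \<le> \<phi> t (\<lambda>s \<omega>. - V s \<omega>) \<omega>"
    using LM Vp_uminus[of V] Vp_uminus[of W] unfolding dyn_LM_def by blast
  then show "AE \<omega> in M. dual_LM \<phi> t V \<omega> \<le> dual_LM \<phi> t W \<omega>"
    by eventually_elim (simp add: dual_LM_def)
qed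

lemma semi_weakly_rejection_tc_iff_dual:
  "semi_weakly_rejection_tc M F T p \<phi> \<longleftrightarrow> semi_weakly_acceptance_tc M F T p (dual_LM \<phi>)"
  unfolding semi_weakly_rejection_tc_def semi_weakly_acceptance_tc_def
  by (subst (2) ball_Vp_uminus, subst (2) ball_measurable_ereal_uminus)
    (simp add: dual_LM_def Esssup_def ereal_le_uminus_iff[of "Essinf M G X \<omega>" for G X \<omega>])

lemma rejection_Esssup_bound_iff_dual:
  "rejection_Esssup_bound M F T p \<phi> \<longleftrightarrow> acceptance_Essinf_bound M F T p (dual_LM \<phi>)"
  unfolding rejection_Esssup_bound_def acceptance_Essinf_bound_def
  by (subst (2) ball_Vp_uminus)
    (simp add: dual_LM_def Esssup_def ereal_le_uminus_iff[of "Essinf M G X \<omega>" for G X \<omega>])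

lemma rejection_Ft_bound_iff_dual:
  "rejection_Ft_bound M F T p \<phi> \<longleftrightarrow> acceptance_Ft_bound M F T p (dual_LM \<phi>)"
  unfolding rejection_Ft_bound_def acceptance_Ft_bound_def
  by (subst (2) ball_Vp_uminus, subst (2) ball_measurable_ereal_uminus) (simp add: dual_LM_def)

theorem proposition4p8:
  fixes M :: "'a measure" and F :: "nat \<Rightarrow> 'a measure" and T :: nat and p :: ennreal
    and \<phi> :: "nat \<Rightarrow> (nat \<Rightarrow> 'a \<Rightarrow> real) \<Rightarrow> 'a \<Rightarrow> ereal"
  assumes "prob_space M"
    and "filtration M F T"
    and "p \<in> {0, 1, \<infinity>}"
    and "dyn_LM M F T p \<phi>"
  shows
   "((\<forall>V\<in>Vp M F T p. \<forall>t<T. \<forall>m \<in> borel_measurable (F (Suc t)).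
        (AE \<omega> in M. \<phi> (Suc t) V \<omega> \<ge> m \<omega>) \<longrightarrow>
        (AE \<omega> in M. \<phi> t V \<omega> \<ge> (if V t \<omega> \<ge> 0 then Essinf M (F t) m \<omega> else -\<infinity>)))
     \<longleftrightarrow>
     (\<forall>V\<in>Vp M F T p. \<forall>t<T.
        AE \<omega> in M. \<phi> t V \<omega> \<ge> (if V t \<omega> \<ge> 0 then Essinf M (F t) (\<phi> (Suc t) V) \<omega> else -\<infinity>)))
    \<and>
    ((\<forall>V\<in>Vp M F T p. \<forall>t<T.
        AE \<omega> in M. \<phi> t V \<omega> \<ge> (if V t \<omega> \<ge> 0 then Essinf M (F t) (\<phi> (Suc t) V) \<omega> else -\<infinity>))
     \<longleftrightarrow>
     (\<forall>V\<in>Vp M F T p. \<forall>t<T. \<forall>m \<in> borel_measurable (F t).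
        (AE \<omega> in M. V t \<omega> \<ge> 0) \<longrightarrow> (AE \<omega> in M. \<phi> (Suc t) V \<omega> \<ge> m \<omega>) \<longrightarrow>
        (AE \<omega> in M. \<phi> t V \<omega> \<ge> m \<omega>)))
    \<and>
    ((\<forall>V\<in>Vp M F T p. \<forall>t<T. \<forall>m \<in> borel_measurable (F (Suc t)).
        (AE \<omega> in M. \<phi> (Suc t) V \<omega> \<le> m \<omega>) \<longrightarrow>
        (AE \<omega> in M. \<phi> t V \<omega> \<le> (if V t \<omega> \<le> 0 then Esssup M (F t) m \<omega> else \<infinity>)))
     \<longleftrightarrow>
     (\<forall>V\<in>Vp M F T p. \<forall>t<T.
        AE \<omega> in M. \<phi> t V \<omega> \<le> (if V t \<omega> \<le> 0 then Esssup M (F t) (\<phi> (Suc t) V) \<omega> else \<infinity>)))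
    \<and>
    ((\<forall>V\<in>Vp M F T p. \<forall>t<T.
        AE \<omega> in M. \<phi> t V \<omega> \<le> (if V t \<omega> \<le> 0 then Esssup M (F t) (\<phi> (Suc t) V) \<omega> else \<infinity>))
     \<longleftrightarrow>
     (\<forall>V\<in>Vp M F T p. \<forall>t<T. \<forall>m \<in> borel_measurable (F t).
        (AE \<omega> in M. V t \<omega> \<le> 0) \<longrightarrow> (AE \<omega> in M. \<phi> (Suc t) V \<omega> \<le> m \<omega>) \<longrightarrow>
        (AE \<omega> in M. \<phi> t V \<omega> \<le> m \<omega>)))"
proof -
  have finite: "finite_measure M"
    using \<open>prob_space M\<close> by (rule prob_space.finite_measure)
  note acceptance = semi_weakly_acceptance_tc_iff_Essinf_bound acceptance_Essinf_bound_iff_Ft_bound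
  have "semi_weakly_acceptance_tc M F T p \<phi> \<longleftrightarrow> acceptance_Essinf_bound M F T p \<phi>"
    "acceptance_Essinf_bound M F T p \<phi> \<longleftrightarrow> acceptance_Ft_bound M F T p \<phi>"
    using acceptance[OF finite \<open>filtration M F T\<close> \<open>dyn_LM M F T p \<phi>\<close>] by auto
  moreover have "semi_weakly_rejection_tc M F T p \<phi> \<longleftrightarrow> rejection_Esssup_bound M F T p \<phi>"
    "rejection_Esssup_bound M F T p \<phi> \<longleftrightarrow> rejection_Ft_bound M F T p \<phi>"
    using acceptance[OF finite \<open>filtration M F T\<close> dyn_LM_dual[OF \<open>dyn_LM M F T p \<phi>\<close>]]
    by (simp_all add: semi_weakly_rejection_tc_iff_dual rejection_Esssup_bound_iff_dual
        rejection_Ft_bound_iff_dual)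
  ultimately show ?thesis
    unfolding semi_weakly_acceptance_tc_def acceptance_Essinf_bound_def acceptance_Ft_bound_def
      semi_weakly_rejection_tc_def rejection_Esssup_bound_def rejection_Ft_bound_def
    by blast
qed

end
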